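(* Let $\theta\in(0,1)$ and $(v_n)_{n\ge1}\sim PD(\theta)$. Then for every $0<\delta<1$ and $n\ge1$, $\mathbb E v_n\le e^{-n\delta^2/8}+C(\theta)(1+\delta)^{1/\theta}\,n^{-1/\theta},$ where $C(\theta)=\dfrac{\Gamma(1+\frac1\theta)}{\Gamma(1-\theta)^{1/\theta}}$.
   Context: $PD(\theta)$: the law of $(u_n/\sum_mu_m)_{n\ge1}$ where $u_1>u_2>\dots$ are the points of a Poisson point process on $(0,\infty)$ with intensity $\theta x^{-1-\theta}dx$. *)

theory Defs
  imports "HOL-Probability.Probability"
begin

definition PD_intensity :: "real \<Rightarrow> real measure" where
  "PD_intensity \<theta> = density lborel
     (\<lambda>x. ennreal (indicator {0<..} x * (\<theta> * x powr (-1 - \<theta>))))"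

definition pcount :: "(nat \<Rightarrow> real) \<Rightarrow> real set \<Rightarrow> nat" where
  "pcount u A = card {n. u n \<in> A}"

text \<open>u is the decreasingly ranked enumeration (index 0 = largest point u_1)
  of a Poisson point process on (0,infinity) with intensity theta x^(-1-theta) dx,
  defined on the probability space M.  The Poisson/independence property is
  imposed on Borel sets bounded away from 0 (a generating ring).\<close>
definition ranked_PPP :: "'a measure \<Rightarrow> real \<Rightarrow> ('a \<Rightarrow> nat \<Rightarrow> real) \<Rightarrow> bool" where
  "ranked_PPP M \<theta> u \<longleftrightarrow>
     prob_space M \<and>
     (\<forall>n. (\<lambda>\<omega>. u \<omega> n) \<in> borel_measurable M) \<and>
     (\<forall>\<omega>\<in>space M. (\<forall>n. 0 < u \<omega> (Suc n) \<and> u \<omega> (Suc n) < u \<omega> n)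
                    \<and> (u \<omega> \<longlonglongrightarrow> 0)) \<and>
     (\<forall>(I::nat set) (A::nat \<Rightarrow> real set) e.
        finite I \<and> 0 < e \<and> (\<forall>i\<in>I. A i \<in> sets borel \<and> A i \<subseteq> {e<..}) \<and>
        disjoint_family_on A I \<longrightarrow>
        prob_space.indep_vars M (\<lambda>_. count_space UNIV) (\<lambda>i \<omega>. pcount (u \<omega>) (A i)) I \<and>
        (\<forall>i\<in>I. \<forall>k::nat.
           measure M {\<omega>\<in>space M. pcount (u \<omega>) (A i) = k}
             = (measure (PD_intensity \<theta>) (A i)) ^ k / fact k
               * exp (- measure (PD_intensity \<theta>) (A i))))"

definition PD_coord :: "(nat \<Rightarrow> real) \<Rightarrow> nat \<Rightarrow> real" where
  "PD_coord u n = u (n - 1) / (\<Sum>m. u m)"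

end

theory Submission
  imports Defs
begin

text \<open>Write \<open>S = \<Sum>\<^sub>m u\<^sub>m\<close> and \<open>t = ((1 + \<delta>)/n)\<^sup>1\<^sup>/\<^sup>\<theta>\<close>. If the \<open>n\<close>-th largest point exceeds \<open>t\<close>,
  then at least \<open>n\<close> points lie in \<open>(t, \<infinity>)\<close>; their number is Poisson with mean
  \<open>t\<^sup>-\<^sup>\<theta> = n/(1 + \<delta>)\<close>, so a Chernoff bound makes this event have probability at most
  \<open>exp (-n\<delta>\<^sup>2/8)\<close>, and there \<open>v\<^sub>n \<le> 1\<close>. Otherwise \<open>v\<^sub>n \<le> t/S\<close>, and
  \<open>E[1/S] = \<integral>\<^sub>0\<^sup>\<infinity> E[exp (-l S)] dl \<le> \<integral>\<^sub>0\<^sup>\<infinity> exp (-\<Gamma>(1-\<theta>) l\<^sup>\<theta>) dl = \<Gamma>(1 + 1/\<theta>) \<Gamma>(1-\<theta>)\<^sup>-\<^sup>1\<^sup>/\<^sup>\<theta>\<close>.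
  The Laplace bound \<open>E[exp (-l S)] \<le> exp (-\<integral> (1 - exp (-l x)) \<theta> x\<^sup>-\<^sup>1\<^sup>-\<^sup>\<theta> dx) = exp (-\<Gamma>(1-\<theta>) l\<^sup>\<theta>)\<close>
  comes from the independent Poisson counts of disjoint dyadic cells, approximating \<open>x\<close> from
  below by step functions.\<close>

section \<open>Integrals against the intensity and the Gamma function\<close>

lemma sets_PD_intensity [simp, measurable_cong]: "sets (PD_intensity \<theta>) = sets borel"
  by (simp add: PD_intensity_def)

lemma nn_integral_PD_density_atLeast:
  assumes "0 < \<theta>" "0 < t"
  shows "(\<integral>\<^sup>+ x. ennreal (\<theta> * x powr (-1 - \<theta>)) * indicator {t..} x \<partial>lborel) = ennreal (t powr (-\<theta>))"
proof -
  have "((\<lambda>x. x powr (-1-\<theta>)) has_integral -(t powr (-1-\<theta>+1)) / (-1-\<theta>+1)) {t..}"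
    using assms by (intro has_integral_powr_to_inf) auto
  from has_integral_mult_right[OF this, of \<theta>]
  have "((\<lambda>x. \<theta> * x powr (-1-\<theta>)) has_integral t powr (-\<theta>)) {t..}"
    using assms by (simp add: field_simps)
  then show ?thesis
    using assms by (intro nn_integral_has_integral_lebesgue') auto
qed

lemma emeasure_PD_intensity_greaterThan:
  assumes "0 < \<theta>" "0 < t"
  shows "emeasure (PD_intensity \<theta>) {t<..} = ennreal (t powr (-\<theta>))"
proof -
  have "emeasure (PD_intensity \<theta>) {t<..} =
      (\<integral>\<^sup>+ x. ennreal (indicator {0<..} x * (\<theta> * x powr (-1 - \<theta>))) * indicator {t<..} x \<partial>lborel)"
    unfolding PD_intensity_def by (subst emeasure_density) auto
  also have "\<dots> = (\<integral>\<^sup>+ x. ennreal (\<theta> * x powr (-1 - \<theta>)) * indicator {t..} x \<partial>lborel)"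
    by (rule nn_integral_cong_AE)
       (use AE_lborel_singleton[of t] in \<open>eventually_elim, use assms in \<open>auto simp: indicator_def\<close>\<close>)
  finally show ?thesis
    using nn_integral_PD_density_atLeast[OF assms] by simp
qed

lemma measure_PD_intensity_greaterThan:
  "0 < \<theta> \<Longrightarrow> 0 < t \<Longrightarrow> measure (PD_intensity \<theta>) {t<..} = t powr (-\<theta>)"
  using emeasure_PD_intensity_greaterThan by (simp add: measure_def)

lemma emeasure_PD_intensity_finite:
  assumes "0 < \<theta>" "0 < t" "A \<subseteq> {t<..}"
  shows "emeasure (PD_intensity \<theta>) A \<noteq> \<infinity>"
proof -
  have "emeasure (PD_intensity \<theta>) A \<le> emeasure (PD_intensity \<theta>) {t<..}"
    using assms(3) by (intro emeasure_mono) auto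
  then show ?thesis
    using emeasure_PD_intensity_greaterThan[OF assms(1,2)] by (auto simp: top_unique)
qed

lemma nn_integral_exp_density_greaterThanAtMost:
  assumes "0 < l" "0 < x"
  shows "(\<integral>\<^sup>+ s. ennreal (l * exp (-l * s)) * indicator {0<..x} s \<partial>lborel) = ennreal (1 - exp (-l * x))"
proof -
  have hi: "((\<lambda>s. l * exp (-l * s)) has_integral ((- exp (-l * x)) - (- exp (-l * 0)))) {0..x}"
    using assms
    by (intro fundamental_theorem_of_calculus)
       (auto intro!: derivative_eq_intros simp flip: has_real_derivative_iff_has_vector_derivative)
  have "(\<integral>\<^sup>+ s. ennreal (l * exp (-l * s)) * indicator {0<..x} s \<partial>lborel)
     = (\<integral>\<^sup>+ s. ennreal (l * exp (-l * s)) * indicator {0..x} s \<partial>lborel)"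
    by (rule nn_integral_cong_AE)
       (use AE_lborel_singleton[of 0] in \<open>eventually_elim, auto simp: indicator_def\<close>)
  also have "\<dots> = ennreal (1 - exp (-l * x))"
    using assms by (subst nn_integral_has_integral_lebesgue'[OF _ hi]) auto
  finally show ?thesis .
qed

lemma nn_integral_exp_neg_mult_atLeast:
  assumes "0 < S"
  shows "(\<integral>\<^sup>+l. ennreal (exp (-l * S)) * indicator {0..} l \<partial>lborel) = ennreal (1 / S)"
proof -
  have "((\<lambda>l::real. exp (-S*l)) has_integral exp (-S*0)/S) {0..}"
    by (rule has_integral_exp_minus_to_infinity) fact
  then have "((\<lambda>l::real. exp (-l*S)) has_integral 1/S) {0..}" by (simp add: mult.commute)
  then show ?thesis by (intro nn_integral_has_integral_lebesgue') auto
qed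

lemma nn_integral_exp_neg_atLeast:
  "(\<integral>\<^sup>+z. ennreal (exp (-z)) * indicator {c..} z \<partial>lborel) = ennreal (exp (-c))"
proof -
  have "((\<lambda>z::real. exp (-1*z)) has_integral exp (-1*c)/1) {c..}"
    by (rule has_integral_exp_minus_to_infinity) simp
  then show ?thesis by (intro nn_integral_has_integral_lebesgue') auto
qed

lemma nn_integral_Gamma_scaled:
  assumes "0 < \<theta>" "\<theta> < 1" "0 < l"
  shows "(\<integral>\<^sup>+ s. ennreal (indicator {0<..} s * (l * exp (-l * s) * s powr (-\<theta>))) \<partial>lborel)
     = ennreal (Gamma (1 - \<theta>) * l powr \<theta>)"
proof -
  define F where "F s = ennreal (indicator {0<..} s * (l * exp (-l * s) * s powr (-\<theta>)))" for s
  have "ennreal (Gamma (1-\<theta>)) = (\<integral>\<^sup>+t. ennreal (indicator {0..} t * t powr (1 - \<theta> - 1) / exp t) \<partial>lborel)"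
    using assms by (intro Gamma_conv_nn_integral_real) auto
  also have "\<dots> = ennreal l * (\<integral>\<^sup>+s. ennreal (indicator {0..} (l * s) * (l * s) powr (-\<theta>) / exp (l * s)) \<partial>lborel)"
    using nn_integral_real_affine[of "\<lambda>t. ennreal (indicator {0..} t * t powr (-\<theta>) / exp t)" l 0] assms
    by simp
  also have "\<dots> = ennreal l * (\<integral>\<^sup>+s. ennreal (l powr (-\<theta>-1)) * F s \<partial>lborel)"
  proof -
    have "AE s in lborel. ennreal (indicator {0..} (l * s) * (l * s) powr (-\<theta>) / exp (l * s))
        = ennreal (l powr (-\<theta>-1)) * F s"
      using AE_lborel_singleton[of 0]
    proof eventually_elim
      case (elim s)
      show ?case
      proof (cases "s > 0")
        case True
        have "(l * s) powr (-\<theta>) / exp (l * s) = l powr (-\<theta>-1) * (l * exp (-l * s) * s powr (-\<theta>))"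
          using True assms by (simp add: powr_mult powr_diff exp_minus field_simps powr_minus)
        then show ?thesis using True assms
          by (simp add: F_def ennreal_mult[symmetric] indicator_def zero_le_mult_iff)
      next
        case False
        with elim have "s < 0" by auto
        then show ?thesis using assms by (simp add: F_def indicator_def mult_pos_neg not_le)
      qed
    qed
    from nn_integral_cong_AE[OF this] show ?thesis by simp
  qed
  also have "\<dots> = ennreal l * (ennreal (l powr (-\<theta>-1)) * integral\<^sup>N lborel F)"
  proof -
    have "F \<in> borel_measurable borel" unfolding F_def by measurable
    then show ?thesis by (subst nn_integral_cmult) auto
  qed
  finally have "ennreal (Gamma (1-\<theta>)) = ennreal (l * l powr (-\<theta>-1)) * integral\<^sup>N lborel F"
    using assms by (simp add: ennreal_mult mult.assoc)
  also have "l * l powr (-\<theta>-1) = l powr (-\<theta>)"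
    using assms by (simp add: powr_diff powr_minus field_simps)
  finally have eq: "ennreal (Gamma (1-\<theta>)) = ennreal (l powr (-\<theta>)) * integral\<^sup>N lborel F" .
  have "ennreal (Gamma (1 - \<theta>) * l powr \<theta>) = ennreal (l powr \<theta>) * ennreal (Gamma (1-\<theta>))"
    using assms Gamma_real_pos[of "1-\<theta>"] by (simp add: ennreal_mult mult.commute)
  also have "\<dots> = ennreal (l powr \<theta> * l powr (-\<theta>)) * integral\<^sup>N lborel F"
    unfolding eq by (simp add: ennreal_mult mult.assoc)
  also have "l powr \<theta> * l powr (-\<theta>) = 1"
    using assms by (simp add: powr_minus)
  finally show ?thesis by (simp add: F_def)
qed

text \<open>Fubini with \<open>1 - exp (-l x) = \<integral>\<^sub>0\<^sup>x l exp (-l s) ds\<close>.\<close>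
lemma nn_integral_PD_intensity_one_minus_exp:
  assumes "0 < \<theta>" "\<theta> < 1" "0 < l"
  shows "(\<integral>\<^sup>+x. ennreal (1 - exp (-l * x)) \<partial>PD_intensity \<theta>) = ennreal (Gamma (1 - \<theta>) * l powr \<theta>)"
proof -
  define G where "G x s = ennreal (if 0 < s \<and> s \<le> x then \<theta> * x powr (-1-\<theta>) * (l * exp (- l * s)) else 0)"
    for x s :: real
  have Gm: "case_prod G \<in> borel_measurable (lborel \<Otimes>\<^sub>M lborel)"
    unfolding G_def by measurable
  have "(\<integral>\<^sup>+x. ennreal (1 - exp (-l * x)) \<partial>PD_intensity \<theta>)
     = (\<integral>\<^sup>+x. ennreal (indicator {0<..} x * (\<theta> * x powr (-1 - \<theta>))) * ennreal (1 - exp (-l * x)) \<partial>lborel)"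
    unfolding PD_intensity_def by (subst nn_integral_density) auto
  also have "\<dots> = (\<integral>\<^sup>+x. (\<integral>\<^sup>+s. G x s \<partial>lborel) \<partial>lborel)"
  proof (rule nn_integral_cong)
    fix x :: real
    show "ennreal (indicator {0<..} x * (\<theta> * x powr (-1 - \<theta>))) * ennreal (1 - exp (-l * x))
        = (\<integral>\<^sup>+s. G x s \<partial>lborel)"
    proof (cases "0 < x")
      case True
      have "ennreal (indicator {0<..} x * (\<theta> * x powr (-1 - \<theta>))) * ennreal (1 - exp (-l * x))
         = ennreal (\<theta> * x powr (-1 - \<theta>)) * (\<integral>\<^sup>+ s. ennreal (l * exp (-l * s)) * indicator {0<..x} s \<partial>lborel)"
        using True nn_integral_exp_density_greaterThanAtMost[OF assms(3) True] by simp
      also have "\<dots> = (\<integral>\<^sup>+ s. ennreal (\<theta> * x powr (-1 - \<theta>)) * (ennreal (l * exp (-l * s)) * indicator {0<..x} s) \<partial>lborel)"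
        by (rule nn_integral_cmult[symmetric]) simp
      also have "\<dots> = (\<integral>\<^sup>+s. G x s \<partial>lborel)"
        by (rule nn_integral_cong)
           (use assms True in \<open>auto simp: G_def indicator_def ennreal_mult[symmetric]\<close>)
      finally show ?thesis .
    next
      case False
      then have "G x s = 0" for s unfolding G_def by auto
      then show ?thesis using False by simp
    qed
  qed
  also have "\<dots> = (\<integral>\<^sup>+s. (\<integral>\<^sup>+x. G x s \<partial>lborel) \<partial>lborel)"
    by (rule lborel_pair.Fubini'[OF Gm, symmetric])
  also have "\<dots> = (\<integral>\<^sup>+ s. ennreal (indicator {0<..} s * (l * exp (-l * s) * s powr (-\<theta>))) \<partial>lborel)"
  proof (rule nn_integral_cong)
    fix s :: real
    show "(\<integral>\<^sup>+x. G x s \<partial>lborel) = ennreal (indicator {0<..} s * (l * exp (-l * s) * s powr (-\<theta>)))"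
    proof (cases "0 < s")
      case True
      have "(\<integral>\<^sup>+x. G x s \<partial>lborel)
          = (\<integral>\<^sup>+x. ennreal (l * exp (-l * s)) * (ennreal (\<theta> * x powr (-1 - \<theta>)) * indicator {s..} x) \<partial>lborel)"
        by (rule nn_integral_cong)
           (use assms True in \<open>auto simp: G_def indicator_def ennreal_mult[symmetric] mult_ac\<close>)
      also have "\<dots> = ennreal (l * exp (-l * s)) * (\<integral>\<^sup>+x. ennreal (\<theta> * x powr (-1 - \<theta>)) * indicator {s..} x \<partial>lborel)"
        by (rule nn_integral_cmult) simp
      also have "\<dots> = ennreal (l * exp (-l * s)) * ennreal (s powr (-\<theta>))"
        using nn_integral_PD_density_atLeast[OF assms(1) True] by simp
      finally show ?thesis using True assms by (simp add: ennreal_mult[symmetric])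
    next
      case False
      then have "G x s = 0" for x unfolding G_def by auto
      then show ?thesis using False by simp
    qed
  qed
  also have "\<dots> = ennreal (Gamma (1 - \<theta>) * l powr \<theta>)"
    by (rule nn_integral_Gamma_scaled[OF assms])
  finally show ?thesis .
qed

lemma powr_le_iff_le_powr_inverse:
  fixes \<theta> l y :: real
  assumes "0 < \<theta>" "0 \<le> l" "0 \<le> y"
  shows "l powr \<theta> \<le> y \<longleftrightarrow> l \<le> y powr (1/\<theta>)"
proof
  assume "l powr \<theta> \<le> y"
  then have "(l powr \<theta>) powr (1/\<theta>) \<le> y powr (1/\<theta>)"
    using assms by (intro powr_mono2) auto
  then show "l \<le> y powr (1/\<theta>)" using assms by (simp add: powr_powr)
next
  assume "l \<le> y powr (1/\<theta>)"
  then have "l powr \<theta> \<le> (y powr (1/\<theta>)) powr \<theta>"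
    using assms by (intro powr_mono2) auto
  then show "l powr \<theta> \<le> y" using assms by (simp add: powr_powr)
qed

text \<open>Fubini with \<open>exp (-a l\<^sup>\<theta>) = \<integral>\<^bsub>a l\<^sup>\<theta>\<^esub>\<^sup>\<infinity> exp (-z) dz\<close>.\<close>
lemma nn_integral_exp_neg_powr:
  assumes "0 < \<theta>" "0 < a"
  shows "(\<integral>\<^sup>+l. ennreal (indicator {0..} l * exp (-(a * l powr \<theta>))) \<partial>lborel)
       = ennreal (Gamma (1 + 1/\<theta>) * a powr (-1/\<theta>))"
proof -
  define K where "K l z = ennreal (if 0 \<le> l \<and> a * l powr \<theta> \<le> z then exp (-z) else 0)" for l z :: real
  have Km: "case_prod K \<in> borel_measurable (lborel \<Otimes>\<^sub>M lborel)"
    unfolding K_def by measurable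
  have "(\<integral>\<^sup>+l. ennreal (indicator {0..} l * exp (-(a * l powr \<theta>))) \<partial>lborel)
      = (\<integral>\<^sup>+l. (\<integral>\<^sup>+z. K l z \<partial>lborel) \<partial>lborel)"
  proof (rule nn_integral_cong)
    fix l :: real
    show "ennreal (indicator {0..} l * exp (-(a * l powr \<theta>))) = (\<integral>\<^sup>+z. K l z \<partial>lborel)"
    proof (cases "0 \<le> l")
      case True
      have "(\<integral>\<^sup>+z. K l z \<partial>lborel) = (\<integral>\<^sup>+z. ennreal (exp (-z)) * indicator {a * l powr \<theta>..} z \<partial>lborel)"
        by (rule nn_integral_cong) (use True in \<open>auto simp: K_def indicator_def\<close>)
      then show ?thesis using True by (simp add: nn_integral_exp_neg_atLeast)
    qed (simp add: K_def)
  qed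
  also have "\<dots> = (\<integral>\<^sup>+z. (\<integral>\<^sup>+l. K l z \<partial>lborel) \<partial>lborel)"
    by (rule lborel_pair.Fubini'[OF Km, symmetric])
  also have "\<dots> = (\<integral>\<^sup>+z. ennreal (indicator {0..} z * z powr (1 + 1/\<theta> - 1) / exp z) * ennreal (a powr (-1/\<theta>)) \<partial>lborel)"
  proof (rule nn_integral_cong)
    fix z :: real
    show "(\<integral>\<^sup>+l. K l z \<partial>lborel)
        = ennreal (indicator {0..} z * z powr (1 + 1/\<theta> - 1) / exp z) * ennreal (a powr (-1/\<theta>))"
    proof (cases "0 \<le> z")
      case True
      have iff: "0 \<le> l \<and> a * l powr \<theta> \<le> z \<longleftrightarrow> l \<in> {0..(z/a) powr (1/\<theta>)}" for l
      proof (cases "0 \<le> l")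
        case True
        have "a * l powr \<theta> \<le> z \<longleftrightarrow> l powr \<theta> \<le> z / a" using assms by (simp add: field_simps)
        also have "\<dots> \<longleftrightarrow> l \<le> (z/a) powr (1/\<theta>)"
          using assms True \<open>0 \<le> z\<close> by (intro powr_le_iff_le_powr_inverse) auto
        finally show ?thesis using True by auto
      qed auto
      have "(\<integral>\<^sup>+l. K l z \<partial>lborel) = (\<integral>\<^sup>+l. ennreal (exp (-z)) * indicator {0..(z/a) powr (1/\<theta>)} l \<partial>lborel)"
        by (rule nn_integral_cong) (simp add: K_def indicator_def iff)
      also have "\<dots> = ennreal (exp (-z) * (z/a) powr (1/\<theta>))"
        by (simp add: nn_integral_cmult_indicator ennreal_mult)
      also have "exp (-z) * (z/a) powr (1/\<theta>) = z powr (1 + 1/\<theta> - 1) / exp z * a powr (-1/\<theta>)"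
      proof -
        have "(z/a) powr (1/\<theta>) = z powr (1/\<theta>) / a powr (1/\<theta>)"
          using assms True by (simp add: powr_divide)
        moreover have "a powr (-1/\<theta>) = 1 / a powr (1/\<theta>)"
          using assms by (simp add: powr_minus_divide)
        ultimately show ?thesis by (simp add: exp_minus field_simps)
      qed
      finally show ?thesis using True assms by (simp add: ennreal_mult[symmetric])
    next
      case False
      have "0 \<le> a * l powr \<theta>" for l using assms by simp
      then have "\<not> (0 \<le> l \<and> a * l powr \<theta> \<le> z)" for l using False by (meson order_trans)
      then have "K l z = 0" for l unfolding K_def by simp
      then show ?thesis using False by simp
    qed
  qed
  also have "\<dots> = (\<integral>\<^sup>+z. ennreal (indicator {0..} z * z powr (1 + 1/\<theta> - 1) / exp z) \<partial>lborel)
      * ennreal (a powr (-1/\<theta>))"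
    by (rule nn_integral_multc) simp
  also have "\<dots> = ennreal (Gamma (1 + 1/\<theta>)) * ennreal (a powr (-1/\<theta>))"
    using assms by (subst Gamma_conv_nn_integral_real[symmetric]) (auto simp: add_pos_pos)
  also have "\<dots> = ennreal (Gamma (1 + 1/\<theta>) * a powr (-1/\<theta>))"
    using assms Gamma_real_pos[of "1 + 1/\<theta>"] by (simp add: ennreal_mult add_pos_pos)
  finally show ?thesis .
qed

lemma inverse_power_powr_neg:
  fixes b :: real
  assumes "0 < b"
  shows "(1 / b ^ m) powr (-\<theta>) = (b powr \<theta>) ^ m"
proof -
  have pow: "b ^ m = b powr real m" using assms by (simp add: powr_realpow)
  have "(1 / b ^ m) powr (-\<theta>) = (b ^ m) powr \<theta>"
    by (simp add: powr_minus_divide powr_divide)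
  also have "\<dots> = (b powr \<theta>) powr (real m)"
    unfolding pow by (simp add: powr_powr mult.commute)
  also have "\<dots> = (b powr \<theta>) ^ m"
    using assms by (simp add: powr_realpow)
  finally show ?thesis .
qed

section \<open>Counting the points of a decreasing null sequence\<close>

lemma finite_pcount_set:
  fixes f :: "nat \<Rightarrow> real"
  assumes "f \<longlonglongrightarrow> 0" "0 < e" "A \<subseteq> {e<..}"
  shows "finite {n. f n \<in> A}"
proof -
  obtain N where N: "\<And>n. n \<ge> N \<Longrightarrow> \<bar>f n\<bar> < e"
    using LIMSEQ_D[OF assms(1,2)] by auto
  have "{n. f n \<in> A} \<subseteq> {..<N}"
  proof
    fix n assume "n \<in> {n. f n \<in> A}"
    then have "e < f n" using assms(3) by auto
    then show "n \<in> {..<N}" using N[of n] by (cases "n \<ge> N") auto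
  qed
  then show ?thesis by (rule finite_subset) simp
qed

lemma downward_closed_nat_set_eq_lessThan:
  fixes S :: "nat set"
  assumes "finite S" "\<And>m k. m \<in> S \<Longrightarrow> k \<le> m \<Longrightarrow> k \<in> S"
  shows "S = {..<card S}"
proof (intro set_eqI iffI)
  fix m assume "m \<in> S"
  then have "{..m} \<subseteq> S" using assms(2) by auto
  then have "card {..m} \<le> card S" by (rule card_mono[OF assms(1)])
  then show "m \<in> {..<card S}" by simp
next
  fix m assume m: "m \<in> {..<card S}"
  show "m \<in> S"
  proof (rule ccontr)
    assume "m \<notin> S"
    then have "S \<subseteq> {..<m}" using assms(2) by (metis lessThan_iff not_le subsetI)
    then have "card S \<le> m" using card_mono[of "{..<m}" S] by simp
    then show False using m by simp
  qed
qed

lemma less_nth_iff_less_pcount: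
  fixes f :: "nat \<Rightarrow> real"
  assumes "\<And>n. f (Suc n) < f n" "f \<longlonglongrightarrow> 0" "0 < t"
  shows "t < f m \<longleftrightarrow> m < pcount f {t<..}"
proof -
  have "decseq f" by (rule decseq_SucI) (use assms(1) less_imp_le in blast)
  have "{n. f n \<in> {t<..}} = {..<card {n. f n \<in> {t<..}}}"
  proof (rule downward_closed_nat_set_eq_lessThan)
    show "finite {n. f n \<in> {t<..}}" by (rule finite_pcount_set[OF assms(2,3)]) simp
    fix a b assume "a \<in> {n. f n \<in> {t<..}}" "b \<le> a"
    then show "b \<in> {n. f n \<in> {t<..}}"
      using \<open>decseq f\<close> by (auto simp: decseq_def intro: less_le_trans)
  qed
  then have "m \<in> {n. f n \<in> {t<..}} \<longleftrightarrow> m \<in> {..<pcount f {t<..}}"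
    unfolding pcount_def by (rule arg_cong)
  then show ?thesis by simp
qed

lemma weighted_pcount_le_suminf:
  fixes I :: "nat set" and f :: "nat \<Rightarrow> real"
  assumes "f \<longlonglongrightarrow> 0" "\<And>n. 0 \<le> f n" "summable f" "finite I" "0 < e"
    "\<And>i. i\<in>I \<Longrightarrow> A i \<subseteq> {e<..}" "disjoint_family_on A I"
    "\<And>i x. i \<in> I \<Longrightarrow> x \<in> A i \<Longrightarrow> c i \<le> x"
  shows "(\<Sum>i\<in>I. c i * real (pcount f (A i))) \<le> suminf f"
proof -
  define B where "B i = {n. f n \<in> A i}" for i
  have finB: "finite (B i)" if "i \<in> I" for i
    unfolding B_def using assms that by (intro finite_pcount_set) auto
  have "(\<Sum>i\<in>I. c i * real (pcount f (A i))) = (\<Sum>i\<in>I. \<Sum>n\<in>B i. c i)"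
    by (simp add: pcount_def B_def mult.commute)
  also have "\<dots> \<le> (\<Sum>i\<in>I. \<Sum>n\<in>B i. f n)"
    by (intro sum_mono) (use assms(8) in \<open>auto simp: B_def\<close>)
  also have "\<dots> = (\<Sum>n\<in>(\<Union>i\<in>I. B i). f n)"
    using assms(4,7) finB by (intro sum.UNION_disjoint[symmetric]) (auto simp: B_def disjoint_family_on_def)
  also have "\<dots> \<le> suminf f"
    by (rule sum_le_suminf) (use assms finB in auto)
  finally show ?thesis .
qed

text \<open>Cauchy condensation: the points in \<open>(2\<^sup>-\<^sup>k\<^sup>-\<^sup>1, 2\<^sup>-\<^sup>k]\<close> contribute at most
  \<open>2\<^sup>-\<^sup>k\<close> each, and there are fewer than \<open>pcount f {2\<^sup>-\<^sup>k\<^sup>-\<^sup>1<..}\<close> of them.\<close>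
lemma summable_if_dyadic_pcounts_summable:
  fixes f :: "nat \<Rightarrow> real"
  assumes dec: "\<And>n. f (Suc n) < f n" and pos: "\<And>n. 0 < f n" and lim: "f \<longlonglongrightarrow> 0"
    and sc: "summable (\<lambda>k. (1/2)^k * real (pcount f {1/2^Suc k<..}))"
  shows "summable f"
proof -
  define C where "C k = pcount f {1/2^k<..}" for k
  define c where "c k = (1/2)^k * real (C (Suc k))" for k
  have iff: "1/2^k < f m \<longleftrightarrow> m < C k" for k m
    unfolding C_def by (rule less_nth_iff_less_pcount[OF dec lim]) simp
  have Cmono: "C k \<le> C (Suc k)" for k
  proof (rule ccontr)
    assume "\<not> C k \<le> C (Suc k)"
    then have "1/2^k < f (C (Suc k))" using iff by simp
    moreover have "(1::real)/2^Suc k < 1/2^k" by (simp add: field_simps)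
    ultimately show False using iff[of "Suc k" "C (Suc k)"] by linarith
  qed
  have partial: "(\<Sum>n<C K. f n) \<le> f 0 * real (C 0) + (\<Sum>k<K. c k)" for K
  proof (induction K)
    case 0
    have "decseq f" by (rule decseq_SucI) (use dec less_imp_le in blast)
    then have "(\<Sum>n<C 0. f n) \<le> (\<Sum>n<C 0. f 0)"
      by (intro sum_mono) (simp add: decseq_def)
    then show ?case by (simp add: mult.commute)
  next
    case (Suc K)
    have "(\<Sum>n<C (Suc K). f n) = (\<Sum>n<C K. f n) + (\<Sum>n\<in>{C K..<C (Suc K)}. f n)"
      using sum.atLeastLessThan_concat[of 0 "C K" "C (Suc K)" f] Cmono[of K]
      by (simp only: atLeast0LessThan)
    also have "(\<Sum>n\<in>{C K..<C (Suc K)}. f n) \<le> (\<Sum>n\<in>{C K..<C (Suc K)}. (1/2)^K)"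
    proof (rule sum_mono)
      fix n assume "n \<in> {C K..<C (Suc K)}"
      then have "\<not> 1/2^K < f n" using iff[of K n] by auto
      then show "f n \<le> (1/2)^K" by (simp add: power_one_over)
    qed
    also have "\<dots> \<le> c K" by (simp add: c_def mult.commute)
    finally show ?case using Suc.IH by simp
  qed
  show ?thesis
  proof (rule bounded_imp_summable)
    show "0 \<le> f n" for n using pos less_imp_le by blast
    fix N
    obtain K where "(1/2::real)^K < f N"
      using real_arch_pow_inv[OF pos[of N], of "1/2"] by auto
    then have "N < C K" using iff[of K N] by (simp add: power_one_over)
    then have "(\<Sum>k\<le>N. f k) \<le> (\<Sum>n<C K. f n)"
      using pos less_imp_le by (intro sum_mono2) auto
    also have "\<dots> \<le> f 0 * real (C 0) + (\<Sum>k<K. c k)" by (rule partial)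
    also have "(\<Sum>k<K. c k) \<le> suminf c"
      using sc unfolding c_def C_def by (intro sum_le_suminf) auto
    finally show "(\<Sum>k\<le>N. f k) \<le> f 0 * real (C 0) + suminf c" by simp
  qed
qed

section \<open>Poisson counts\<close>

lemma Poisson_power_sums:
  fixes s \<mu> :: real
  shows "(\<lambda>k. s ^ k * (\<mu> ^ k / fact k * exp (-\<mu>))) sums exp (\<mu> * (s - 1))"
proof -
  have "(\<lambda>k. (s * \<mu>) ^ k /\<^sub>R fact k * exp (-\<mu>)) sums (exp (s * \<mu>) * exp (-\<mu>))"
    by (intro sums_mult2 exp_converges)
  moreover have "exp (s * \<mu>) * exp (-\<mu>) = exp (\<mu> * (s - 1))"
  proof -
    have "exp (s * \<mu>) * exp (-\<mu>) = exp (s * \<mu> + - \<mu>)"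
      by (rule mult_exp_exp)
    also have "s * \<mu> + - \<mu> = \<mu> * (s - 1)"
      by (simp add: algebra_simps)
    finally show ?thesis .
  qed
  ultimately show ?thesis
    by (simp add: power_mult_distrib divide_inverse mult_ac)
qed

lemma Poisson_mean_sums:
  fixes \<mu> :: real
  shows "(\<lambda>k. real k * (\<mu> ^ k / fact k * exp (-\<mu>))) sums \<mu>"
proof -
  have "(\<lambda>k. \<mu> * (\<mu> ^ k /\<^sub>R fact k) * exp (-\<mu>)) sums (\<mu> * exp \<mu> * exp (-\<mu>))"
    by (intro sums_mult2 sums_mult exp_converges)
  also have "\<mu> * exp \<mu> * exp (-\<mu>) = \<mu>"
    by (simp add: exp_minus)
  finally have "(\<lambda>k. \<mu> * (\<mu> ^ k /\<^sub>R fact k) * exp (-\<mu>)) sums \<mu>" .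
  moreover have "real (Suc k) * (\<mu> ^ Suc k / fact (Suc k) * exp (-\<mu>)) = \<mu> * (\<mu> ^ k /\<^sub>R fact k) * exp (-\<mu>)"
    for k
    by (simp add: divide_simps del: of_nat_Suc)
  ultimately have "(\<lambda>k. real (Suc k) * (\<mu> ^ Suc k / fact (Suc k) * exp (-\<mu>))) sums \<mu>"
    by simp
  then show ?thesis
    by (subst (asm) sums_Suc_iff) simp
qed

context prob_space
begin

lemma nn_integral_Poisson_count:
  assumes N: "N \<in> measurable M (count_space UNIV)"
    and Poisson: "\<And>k. prob {\<omega>\<in>space M. N \<omega> = k} = \<mu> ^ k / fact k * exp (-\<mu>)"
    and g: "\<And>k. 0 \<le> g k"
  shows "(\<integral>\<^sup>+\<omega>. ennreal (g (N \<omega>)) \<partial>M) = (\<Sum>k. ennreal (g k * (\<mu> ^ k / fact k * exp (-\<mu>))))"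
proof -
  have sets: "{\<omega>\<in>space M. N \<omega> = k} \<in> sets M" for k
    using N by measurable
  have "(\<integral>\<^sup>+\<omega>. ennreal (g (N \<omega>)) \<partial>M)
      = (\<integral>\<^sup>+\<omega>. (\<Sum>k. ennreal (g k) * indicator {\<omega>\<in>space M. N \<omega> = k} \<omega>) \<partial>M)"
  proof (rule nn_integral_cong)
    fix \<omega> assume "\<omega> \<in> space M"
    then have "(\<lambda>k. ennreal (g k) * indicator {\<omega>\<in>space M. N \<omega> = k} \<omega>)
        = (\<lambda>k. if k = N \<omega> then ennreal (g (N \<omega>)) else 0)"
      by (auto simp: indicator_def)
    then show "ennreal (g (N \<omega>)) = (\<Sum>k. ennreal (g k) * indicator {\<omega>\<in>space M. N \<omega> = k} \<omega>)"
      using sums_unique[OF sums_single[of "N \<omega>" "\<lambda>_. ennreal (g (N \<omega>))"]] by simp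
  qed
  also have "\<dots> = (\<Sum>k. \<integral>\<^sup>+\<omega>. ennreal (g k) * indicator {\<omega>\<in>space M. N \<omega> = k} \<omega> \<partial>M)"
    by (rule nn_integral_suminf) (use sets in auto)
  also have "\<dots> = (\<Sum>k. ennreal (g k * (\<mu> ^ k / fact k * exp (-\<mu>))))"
  proof (rule suminf_cong)
    fix k
    have "(\<integral>\<^sup>+\<omega>. ennreal (g k) * indicator {\<omega>\<in>space M. N \<omega> = k} \<omega> \<partial>M)
        = ennreal (g k) * ennreal (prob {\<omega>\<in>space M. N \<omega> = k})"
      using sets by (simp add: nn_integral_cmult_indicator emeasure_eq_measure)
    also have "\<dots> = ennreal (g k * prob {\<omega>\<in>space M. N \<omega> = k})"
      using g by (subst ennreal_mult) auto
    finally show "(\<integral>\<^sup>+\<omega>. ennreal (g k) * indicator {\<omega>\<in>space M. N \<omega> = k} \<omega> \<partial>M)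
        = ennreal (g k * (\<mu> ^ k / fact k * exp (-\<mu>)))"
      by (simp only: Poisson)
  qed
  finally show ?thesis .
qed

lemma nn_integral_power_Poisson_count:
  assumes N: "N \<in> measurable M (count_space UNIV)"
    and Poisson: "\<And>k. prob {\<omega>\<in>space M. N \<omega> = k} = \<mu> ^ k / fact k * exp (-\<mu>)"
    and "0 \<le> s"
  shows "(\<integral>\<^sup>+\<omega>. ennreal (s ^ N \<omega>) \<partial>M) = ennreal (exp (\<mu> * (s - 1)))"
proof -
  have p_nonneg: "0 \<le> \<mu> ^ k / fact k * exp (-\<mu>)" for k
    by (metis Poisson measure_nonneg)
  have "(\<integral>\<^sup>+\<omega>. ennreal (s ^ N \<omega>) \<partial>M) = (\<Sum>k. ennreal (s ^ k * (\<mu> ^ k / fact k * exp (-\<mu>))))"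
    using \<open>0 \<le> s\<close> by (intro nn_integral_Poisson_count[OF N Poisson, where g="\<lambda>k. s ^ k"]) simp
  also have "\<dots> = ennreal (exp (\<mu> * (s - 1)))"
    using \<open>0 \<le> s\<close> p_nonneg by (intro suminf_ennreal_eq Poisson_power_sums mult_nonneg_nonneg[OF zero_le_power p_nonneg])
  finally show ?thesis .
qed

lemma nn_integral_Poisson_count_eq_mean:
  assumes N: "N \<in> measurable M (count_space UNIV)"
    and Poisson: "\<And>k. prob {\<omega>\<in>space M. N \<omega> = k} = \<mu> ^ k / fact k * exp (-\<mu>)"
  shows "(\<integral>\<^sup>+\<omega>. ennreal (real (N \<omega>)) \<partial>M) = ennreal \<mu>"
proof -
  have p_nonneg: "0 \<le> \<mu> ^ k / fact k * exp (-\<mu>)" for k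
    by (metis Poisson measure_nonneg)
  have "(\<integral>\<^sup>+\<omega>. ennreal (real (N \<omega>)) \<partial>M) = (\<Sum>k. ennreal (real k * (\<mu> ^ k / fact k * exp (-\<mu>))))"
    by (intro nn_integral_Poisson_count[OF N Poisson, where g=real]) simp
  also have "\<dots> = ennreal \<mu>"
    using p_nonneg by (intro suminf_ennreal_eq Poisson_mean_sums mult_nonneg_nonneg[OF of_nat_0_le_iff p_nonneg])
  finally show ?thesis .
qed

end

lemma ln_one_plus_ge:
  fixes x :: real
  assumes "0 \<le> x"
  shows "2 * x / (2 + x) \<le> ln (1 + x)"
proof -
  define f where "f y = ln (1 + y) - 2 * y / (2 + y)" for y :: real
  have "f 0 \<le> f x"
  proof (rule DERIV_nonneg_imp_nondecreasing[OF assms])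
    fix y :: real assume y: "0 \<le> y" "y \<le> x"
    have "((\<lambda>y. ln (1 + y)) has_real_derivative (1 / (1 + y))) (at y)"
      using y by (auto intro!: derivative_eq_intros)
    moreover have "((\<lambda>y. 2 * y / (2 + y)) has_real_derivative (4 / (2 + y)^2)) (at y)"
      using y by (auto intro!: derivative_eq_intros simp: power2_eq_square field_simps)
    ultimately have "DERIV f y :> 1 / (1 + y) - 4 / (2 + y)^2"
      unfolding f_def by (rule DERIV_diff)
    moreover have "1 / (1 + y) - 4 / (2 + y)^2 = ((2 + y)^2 - 4 * (1 + y)) / ((1 + y) * (2 + y)^2)"
      using y by (simp add: diff_frac_eq)
    moreover have "(2 + y)^2 - 4 * (1 + y) = y^2"
      by (simp add: power2_eq_square algebra_simps)
    moreover have "0 \<le> y^2 / ((1 + y) * (2 + y)^2)" using y by simp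
    ultimately show "\<exists>d. DERIV f y :> d \<and> 0 \<le> d" by metis
  qed
  then show ?thesis by (simp add: f_def)
qed

lemma Poisson_Chernoff_exponent_le:
  fixes \<delta> :: real
  assumes "0 < \<delta>" "\<delta> < 1"
  shows "\<delta> / (1 + \<delta>) - ln (1 + \<delta>) \<le> - (\<delta> ^ 2) / 8"
proof -
  have "2 * \<delta> / (2 + \<delta>) - \<delta> / (1 + \<delta>) = \<delta> ^ 2 / ((2 + \<delta>) * (1 + \<delta>))"
    using assms by (simp add: field_simps power2_eq_square)
  moreover have "\<delta> ^ 2 / 8 \<le> \<delta> ^ 2 / ((2 + \<delta>) * (1 + \<delta>))"
  proof (rule divide_left_mono)
    have "(2 + \<delta>) * (1 + \<delta>) \<le> 3 * 2" using assms by (intro mult_mono) auto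
    then show "(2 + \<delta>) * (1 + \<delta>) \<le> 8" by simp
  qed (use assms in auto)
  ultimately show ?thesis using ln_one_plus_ge[of \<delta>] assms by linarith
qed

section \<open>Dyadic approximation of the Laplace exponent\<close>

definition dyadic_cell :: "nat \<Rightarrow> nat \<Rightarrow> real set" where
  "dyadic_cell m j = {real j / 2^m ..< (real j + 1) / 2^m}"

definition dyadic_index :: "nat \<Rightarrow> real \<Rightarrow> int" where
  "dyadic_index m x = \<lfloor>x * 2^m\<rfloor>"

text \<open>Simple functions increasing to \<open>1 - exp (-l x)\<close>; they are constant on the dyadic cells
  \<open>[j/2\<^sup>m, (j+1)/2\<^sup>m)\<close> with \<open>1 \<le> j < m 2\<^sup>m\<close>, which stay away from \<open>0\<close>.\<close>
definition laplace_step :: "real \<Rightarrow> nat \<Rightarrow> real \<Rightarrow> ennreal" where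
  "laplace_step l m x =
     (if 1 \<le> dyadic_index m x \<and> dyadic_index m x < int m * 2^m
      then ennreal (1 - exp (-l * (real_of_int (dyadic_index m x) / 2^m))) else 0)"

definition laplace_step_sum :: "real \<Rightarrow> real \<Rightarrow> nat \<Rightarrow> real" where
  "laplace_step_sum \<theta> l m =
     (\<Sum>j\<in>{1..<m*2^m}. (1 - exp (-l * (real j / 2^m))) * measure (PD_intensity \<theta>) (dyadic_cell m j))"

lemma mem_dyadic_cell_iff: "x \<in> dyadic_cell m j \<longleftrightarrow> dyadic_index m x = int j"
proof -
  have "x \<in> dyadic_cell m j \<longleftrightarrow> real j \<le> x * 2^m \<and> x * 2^m < real j + 1"
    by (simp add: dyadic_cell_def field_simps)
  then show ?thesis
    unfolding dyadic_index_def by (simp add: floor_eq_iff)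
qed

lemma dyadic_cell_subset: "1 \<le> j \<Longrightarrow> dyadic_cell m j \<subseteq> {1/2^Suc m<..}"
proof
  fix x assume "1 \<le> j" "x \<in> dyadic_cell m j"
  moreover have "1/2^Suc m < real j / 2^m"
    using \<open>1 \<le> j\<close> by (simp add: field_simps)
  ultimately show "x \<in> {1/2^Suc m<..}" by (simp add: dyadic_cell_def)
qed

lemma disjoint_family_dyadic_cell: "disjoint_family_on (dyadic_cell m) I"
  unfolding disjoint_family_on_def by (auto simp: mem_dyadic_cell_iff)

lemma dyadic_cell_borel [measurable]: "dyadic_cell m j \<in> sets borel"
  by (simp add: dyadic_cell_def)

lemma laplace_step_eq_sum:
  "laplace_step l m x
     = (\<Sum>j\<in>{1..<m*2^m}. ennreal (1 - exp (-l * (real j / 2^m))) * indicator (dyadic_cell m j) x)"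
proof -
  have "(\<Sum>j\<in>{1..<m*2^m}. ennreal (1 - exp (-l * (real j / 2^m))) * indicator (dyadic_cell m j) x)
     = (\<Sum>j\<in>{1..<m*2^m}. if int j = dyadic_index m x then ennreal (1 - exp (-l * (real j / 2^m))) else 0)"
    by (intro sum.cong) (auto simp: mem_dyadic_cell_iff indicator_def)
  also have "\<dots> = laplace_step l m x"
  proof (cases "0 \<le> dyadic_index m x")
    case True
    then obtain k where k: "dyadic_index m x = int k" by (metis nonneg_eq_int)
    have "int k < int m * 2^m \<longleftrightarrow> k < m * 2^m"
      by (metis of_nat_less_iff of_nat_mult of_nat_numeral of_nat_power)
    then show ?thesis
      unfolding laplace_step_def k by (simp add: sum.delta)
  next
    case False
    then show ?thesis by (auto simp: laplace_step_def intro!: sum.neutral)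
  qed
  finally show ?thesis ..
qed

lemma dyadic_index_Suc_ge: "2 * dyadic_index m x \<le> dyadic_index (Suc m) x"
proof -
  have "real_of_int (2 * \<lfloor>x * 2^m\<rfloor>) \<le> x * 2^Suc m"
    using of_int_floor_le[of "x * 2^m"] by simp
  then show ?thesis unfolding dyadic_index_def by (simp add: le_floor_iff)
qed

lemma dyadic_index_div_tendsto: "(\<lambda>m. real_of_int (dyadic_index m x) / 2^m) \<longlonglongrightarrow> x"
proof (rule tendsto_sandwich)
  show "\<forall>\<^sub>F m in sequentially. x - (1/2)^m \<le> real_of_int (dyadic_index m x) / 2^m"
  proof (intro always_eventually allI)
    fix m :: nat
    have "x * 2^m - 1 \<le> real_of_int (dyadic_index m x)" unfolding dyadic_index_def by linarith
    then have "(x * 2^m - 1) / 2^m \<le> real_of_int (dyadic_index m x) / 2^m"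
      by (intro divide_right_mono) auto
    then show "x - (1/2)^m \<le> real_of_int (dyadic_index m x) / 2^m"
      by (simp add: diff_divide_distrib power_divide)
  qed
  show "\<forall>\<^sub>F m in sequentially. real_of_int (dyadic_index m x) / 2^m \<le> x"
    by (intro always_eventually allI) (simp add: dyadic_index_def field_simps)
  have "(\<lambda>m. (1/2::real)^m) \<longlonglongrightarrow> 0"
    by (rule LIMSEQ_power_zero) simp
  then show "(\<lambda>m. x - (1/2::real)^m) \<longlonglongrightarrow> x"
    using tendsto_diff[OF tendsto_const[of x]] by fastforce
qed (rule tendsto_const)

lemma laplace_step_mono:
  assumes "0 \<le> l"
  shows "laplace_step l m x \<le> laplace_step l (Suc m) x"
proof (cases "1 \<le> dyadic_index m x \<and> dyadic_index m x < int m * 2^m")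
  case True
  have a: "1 \<le> dyadic_index (Suc m) x" using dyadic_index_Suc_ge[of m x] True by linarith
  have "x * 2^m < real m * 2^m"
    using True unfolding dyadic_index_def by (simp add: floor_less_iff)
  then have "x * 2^Suc m < (real m + 1) * 2^Suc m" by simp
  then have b: "dyadic_index (Suc m) x < int (Suc m) * 2^Suc m"
    unfolding dyadic_index_def by (simp add: floor_less_iff)
  have "real_of_int (2 * dyadic_index m x) \<le> real_of_int (dyadic_index (Suc m) x)"
    using dyadic_index_Suc_ge[of m x] by linarith
  then have le: "real_of_int (dyadic_index m x) / 2^m \<le> real_of_int (dyadic_index (Suc m) x) / 2^Suc m"
    by (simp add: field_simps)
  have "1 - exp (-l * (real_of_int (dyadic_index m x) / 2^m))
      \<le> 1 - exp (-l * (real_of_int (dyadic_index (Suc m) x) / 2^Suc m))"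
    using mult_left_mono[OF le assms] by simp
  then show ?thesis using True a b unfolding laplace_step_def by (simp add: ennreal_leI)
qed (auto simp: laplace_step_def[of l m x])

lemma laplace_step_tendsto:
  assumes "0 \<le> l"
  shows "(\<lambda>m. laplace_step l m x) \<longlonglongrightarrow> ennreal (1 - exp (-l * x))"
proof (cases "0 < x")
  case True
  obtain N1 :: nat where N1: "x < real N1" using reals_Archimedean2 by blast
  obtain N2 :: nat where N2: "1 / x < 2 ^ N2" using real_arch_pow[of 2 "1/x"] by auto
  have "laplace_step l m x = ennreal (1 - exp (-l * (real_of_int (dyadic_index m x) / 2^m)))"
    if m: "m \<ge> max N1 N2" for m
  proof -
    have "(2::real)^N2 \<le> 2^m" using m by (intro power_increasing) auto
    with N2 have "1 / x < 2^m" by linarith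
    then have "1 \<le> x * 2^m" using True by (simp add: field_simps)
    then have "1 \<le> dyadic_index m x" unfolding dyadic_index_def by (simp add: le_floor_iff)
    moreover have "x < real m" using N1 m by linarith
    then have "x * 2^m < real m * 2^m" by simp
    then have "dyadic_index m x < int m * 2^m" unfolding dyadic_index_def by (simp add: floor_less_iff)
    ultimately show ?thesis by (simp add: laplace_step_def)
  qed
  then have "\<forall>\<^sub>F m in sequentially.
      ennreal (1 - exp (-l * (real_of_int (dyadic_index m x) / 2^m))) = laplace_step l m x"
    unfolding eventually_sequentially by metis
  moreover have "(\<lambda>m. ennreal (1 - exp (-l * (real_of_int (dyadic_index m x) / 2^m))))
      \<longlonglongrightarrow> ennreal (1 - exp (-l * x))"
    by (intro tendsto_ennrealI tendsto_intros dyadic_index_div_tendsto)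
  ultimately show ?thesis
    by (rule Lim_transform_eventually[rotated])
next
  case False
  have "dyadic_index m x < 1" for m
    using False mult_nonpos_nonneg[of x "2^m"] unfolding dyadic_index_def by (simp add: floor_less_iff)
  then have "laplace_step l m x = 0" for m unfolding laplace_step_def by (metis not_le)
  moreover have "ennreal (1 - exp (-l * x)) = 0"
    using False assms by (simp add: mult_nonneg_nonpos ennreal_eq_0_iff)
  ultimately show ?thesis by simp
qed

lemma nn_integral_laplace_step:
  assumes "0 < \<theta>" "0 \<le> l"
  shows "(\<integral>\<^sup>+x. laplace_step l m x \<partial>PD_intensity \<theta>) = ennreal (laplace_step_sum \<theta> l m)"
proof -
  have "(\<integral>\<^sup>+x. laplace_step l m x \<partial>PD_intensity \<theta>)
     = (\<Sum>j\<in>{1..<m*2^m}. (\<integral>\<^sup>+x. ennreal (1 - exp (-l * (real j / 2^m))) * indicator (dyadic_cell m j) x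
          \<partial>PD_intensity \<theta>))"
    unfolding laplace_step_eq_sum by (rule nn_integral_sum) measurable
  also have "\<dots> = (\<Sum>j\<in>{1..<m*2^m}.
      ennreal ((1 - exp (-l * (real j / 2^m))) * measure (PD_intensity \<theta>) (dyadic_cell m j)))"
  proof (rule sum.cong[OF refl])
    fix j assume "j \<in> {1..<m*2^m}"
    then have "emeasure (PD_intensity \<theta>) (dyadic_cell m j) \<noteq> \<infinity>"
      using assms(1) dyadic_cell_subset[of j m] by (intro emeasure_PD_intensity_finite) auto
    then show "(\<integral>\<^sup>+x. ennreal (1 - exp (-l * (real j / 2^m))) * indicator (dyadic_cell m j) x \<partial>PD_intensity \<theta>)
       = ennreal ((1 - exp (-l * (real j / 2^m))) * measure (PD_intensity \<theta>) (dyadic_cell m j))"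
      using assms by (simp add: nn_integral_cmult_indicator emeasure_eq_ennreal_measure ennreal_mult)
  qed
  also have "\<dots> = ennreal (laplace_step_sum \<theta> l m)"
    unfolding laplace_step_sum_def using assms by (subst sum_ennreal) auto
  finally show ?thesis .
qed

lemma laplace_step_sum_tendsto:
  assumes "0 < \<theta>" "\<theta> < 1" "0 < l"
  shows "laplace_step_sum \<theta> l \<longlonglongrightarrow> Gamma (1 - \<theta>) * l powr \<theta>"
proof -
  have inc: "incseq (\<lambda>m. laplace_step l m)"
    using assms by (auto simp: incseq_Suc_iff le_fun_def intro: laplace_step_mono)
  have sup: "(SUP m. laplace_step l m x) = ennreal (1 - exp (-l * x))" for x
    using inc assms
    by (intro LIMSEQ_unique[OF LIMSEQ_SUP laplace_step_tendsto]) (auto simp: incseq_def le_fun_def)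
  have meas: "laplace_step l m \<in> borel_measurable (PD_intensity \<theta>)" for m
    unfolding laplace_step_eq_sum by measurable
  have "(\<lambda>m. \<integral>\<^sup>+x. laplace_step l m x \<partial>PD_intensity \<theta>)
      \<longlonglongrightarrow> (SUP m. \<integral>\<^sup>+x. laplace_step l m x \<partial>PD_intensity \<theta>)"
    using inc by (intro LIMSEQ_SUP) (auto simp: incseq_def le_fun_def intro!: nn_integral_mono)
  also have "(SUP m. \<integral>\<^sup>+x. laplace_step l m x \<partial>PD_intensity \<theta>)
      = (\<integral>\<^sup>+x. (SUP m. laplace_step l m x) \<partial>PD_intensity \<theta>)"
    by (rule nn_integral_monotone_convergence_SUP[symmetric, OF inc meas])
  also have "\<dots> = ennreal (Gamma (1 - \<theta>) * l powr \<theta>)"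
    unfolding sup by (rule nn_integral_PD_intensity_one_minus_exp[OF assms])
  finally have "(\<lambda>m. ennreal (laplace_step_sum \<theta> l m)) \<longlonglongrightarrow> ennreal (Gamma (1 - \<theta>) * l powr \<theta>)"
    using nn_integral_laplace_step assms by simp
  moreover have "0 \<le> laplace_step_sum \<theta> l m" for m
    using assms unfolding laplace_step_sum_def by (intro sum_nonneg mult_nonneg_nonneg) auto
  ultimately show ?thesis
    using assms Gamma_real_pos[of "1-\<theta>"] by (subst (asm) tendsto_ennreal_iff) auto
qed

lemma exp_neg_suminf_le_prod_power_pcount:
  fixes f :: "nat \<Rightarrow> real"
  assumes "f \<longlonglongrightarrow> 0" "\<And>n. 0 \<le> f n" "summable f" "0 \<le> l"
  shows "exp (-l * suminf f)
    \<le> (\<Prod>j\<in>{1..<m*2^m}. exp (-l * (real j / 2^m)) ^ pcount f (dyadic_cell m j))"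
proof -
  define I where "I = {1..<m*2^m}"
  have "(\<Sum>j\<in>I. real j / 2^m * real (pcount f (dyadic_cell m j))) \<le> suminf f"
  proof (rule weighted_pcount_le_suminf[OF assms(1-3)])
    show "dyadic_cell m j \<subseteq> {1/2^Suc m<..}" if "j \<in> I" for j
      using that dyadic_cell_subset by (auto simp: I_def)
    show "real j / 2^m \<le> x" if "j \<in> I" "x \<in> dyadic_cell m j" for j x
      using that by (simp add: dyadic_cell_def)
  qed (auto simp: I_def disjoint_family_dyadic_cell)
  then have "exp (-l * suminf f) \<le> exp (-l * (\<Sum>j\<in>I. real j / 2^m * real (pcount f (dyadic_cell m j))))"
    using mult_left_mono[OF _ assms(4)] by simp
  also have "\<dots> = (\<Prod>j\<in>I. exp (-l * (real j / 2^m)) ^ pcount f (dyadic_cell m j))"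
    by (simp add: sum_distrib_left exp_sum I_def exp_of_nat_mult[symmetric] mult_ac)
  finally show ?thesis by (simp add: I_def)
qed

section \<open>The ranked Poisson point process\<close>

lemma PD_coord_nonneg: "summable f \<Longrightarrow> (\<And>m. 0 \<le> f m) \<Longrightarrow> 0 \<le> PD_coord f n"
  unfolding PD_coord_def by (simp add: suminf_nonneg)

lemma PD_coord_le:
  fixes f :: "nat \<Rightarrow> real" and t :: real
  assumes "summable f" "\<And>m. 0 < f m"
  shows "PD_coord f n \<le> (if t < f (n - 1) then 1 else t * (1 / suminf f))"
proof -
  have pos: "0 < suminf f"
    using assms by (intro suminf_pos) auto
  have "sum f {n - 1} \<le> suminf f"
    using assms by (intro sum_le_suminf) (auto intro: less_imp_le)
  then show ?thesis
    using pos by (auto simp: PD_coord_def divide_le_eq_1 divide_right_mono)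
qed

locale ranked_Poisson_process =
  fixes M :: "'a measure" and \<theta> :: real and u :: "'a \<Rightarrow> nat \<Rightarrow> real"
  assumes ranked_PPP: "ranked_PPP M \<theta> u"
begin

sublocale prob_space M
  using ranked_PPP by (simp add: ranked_PPP_def)

lemma measurable_point [measurable]: "(\<lambda>\<omega>. u \<omega> n) \<in> borel_measurable M"
  using ranked_PPP by (simp add: ranked_PPP_def)

lemma
  assumes "\<omega> \<in> space M"
  shows point_Suc_less: "u \<omega> (Suc n) < u \<omega> n"
    and point_tendsto_zero: "u \<omega> \<longlonglongrightarrow> 0"
    and point_pos: "0 < u \<omega> n"
proof -
  have *: "\<And>n. 0 < u \<omega> (Suc n) \<and> u \<omega> (Suc n) < u \<omega> n" "u \<omega> \<longlonglongrightarrow> 0"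
    using ranked_PPP assms by (auto simp: ranked_PPP_def)
  then show "u \<omega> (Suc n) < u \<omega> n" "u \<omega> \<longlonglongrightarrow> 0"
    by auto
  show "0 < u \<omega> n"
    using *(1)[of 0] *(1)[of "n - 1"] by (cases n) auto
qed

lemma less_point_iff_less_pcount:
  "\<omega> \<in> space M \<Longrightarrow> 0 < t \<Longrightarrow> t < u \<omega> m \<longleftrightarrow> m < pcount (u \<omega>) {t<..}"
  by (intro less_nth_iff_less_pcount point_Suc_less point_tendsto_zero)

lemma Poisson_property:
  fixes I :: "nat set"
  assumes "finite I" "0 < e" "\<And>i. i \<in> I \<Longrightarrow> A i \<in> sets borel \<and> A i \<subseteq> {e<..}"
    "disjoint_family_on A I"
  shows "indep_vars (\<lambda>_. count_space UNIV) (\<lambda>i \<omega>. pcount (u \<omega>) (A i)) I"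
    and "\<And>i k. i \<in> I \<Longrightarrow> prob {\<omega>\<in>space M. pcount (u \<omega>) (A i) = k}
           = measure (PD_intensity \<theta>) (A i) ^ k / fact k * exp (- measure (PD_intensity \<theta>) (A i))"
proof -
  have "\<forall>(I::nat set) (A::nat \<Rightarrow> real set) e.
        finite I \<and> 0 < e \<and> (\<forall>i\<in>I. A i \<in> sets borel \<and> A i \<subseteq> {e<..}) \<and> disjoint_family_on A I \<longrightarrow>
        indep_vars (\<lambda>_. count_space UNIV) (\<lambda>i \<omega>. pcount (u \<omega>) (A i)) I \<and>
        (\<forall>i\<in>I. \<forall>k::nat. prob {\<omega>\<in>space M. pcount (u \<omega>) (A i) = k}
             = (measure (PD_intensity \<theta>) (A i)) ^ k / fact k * exp (- measure (PD_intensity \<theta>) (A i)))"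
    using ranked_PPP by (simp add: ranked_PPP_def)
  from this[rule_format, of I e A] assms
  show "indep_vars (\<lambda>_. count_space UNIV) (\<lambda>i \<omega>. pcount (u \<omega>) (A i)) I"
    and "\<And>i k. i \<in> I \<Longrightarrow> prob {\<omega>\<in>space M. pcount (u \<omega>) (A i) = k}
           = measure (PD_intensity \<theta>) (A i) ^ k / fact k * exp (- measure (PD_intensity \<theta>) (A i))"
    by auto
qed

context
  fixes A :: "real set" and e :: real
  assumes e: "0 < e" and A: "A \<in> sets borel" "A \<subseteq> {e<..}"
begin

lemma pcount_Poisson:
  "prob {\<omega>\<in>space M. pcount (u \<omega>) A = k}
     = measure (PD_intensity \<theta>) A ^ k / fact k * exp (- measure (PD_intensity \<theta>) A)"
  by (rule Poisson_property(2)[of "{0}" e "\<lambda>_. A"]) (use e A in \<open>auto simp: disjoint_family_on_def\<close>)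

lemma measurable_pcount: "(\<lambda>\<omega>. pcount (u \<omega>) A) \<in> measurable M (count_space UNIV)"
proof -
  have "indep_vars (\<lambda>_. count_space UNIV) (\<lambda>i \<omega>. pcount (u \<omega>) ((\<lambda>_::nat. A) i)) {0}"
    using e A by (intro Poisson_property(1)) (auto simp: disjoint_family_on_def)
  then show ?thesis unfolding indep_vars_def by auto
qed

lemma nn_integral_power_pcount:
  "0 \<le> s \<Longrightarrow> (\<integral>\<^sup>+\<omega>. ennreal (s ^ pcount (u \<omega>) A) \<partial>M)
     = ennreal (exp (measure (PD_intensity \<theta>) A * (s - 1)))"
  by (rule nn_integral_power_Poisson_count[OF measurable_pcount pcount_Poisson])

lemma nn_integral_pcount:
  "(\<integral>\<^sup>+\<omega>. ennreal (real (pcount (u \<omega>) A)) \<partial>M) = ennreal (measure (PD_intensity \<theta>) A)"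
  by (rule nn_integral_Poisson_count_eq_mean[OF measurable_pcount pcount_Poisson])

end

lemma nn_integral_prod_power_pcount:
  fixes I :: "nat set"
  assumes "finite I" "0 < e" "\<And>i. i \<in> I \<Longrightarrow> A i \<in> sets borel \<and> A i \<subseteq> {e<..}"
    "disjoint_family_on A I" "\<And>i. i \<in> I \<Longrightarrow> 0 \<le> s i"
  shows "(\<integral>\<^sup>+\<omega>. ennreal (\<Prod>i\<in>I. s i ^ pcount (u \<omega>) (A i)) \<partial>M)
     = ennreal (\<Prod>i\<in>I. exp (measure (PD_intensity \<theta>) (A i) * (s i - 1)))"
proof -
  have ind: "indep_vars (\<lambda>_. borel) (\<lambda>i \<omega>. (\<lambda>n. ennreal (s i ^ n)) (pcount (u \<omega>) (A i))) I"
    by (rule indep_vars_compose2[OF Poisson_property(1)[OF assms(1-4)]]) measurable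
  have "(\<integral>\<^sup>+\<omega>. ennreal (\<Prod>i\<in>I. s i ^ pcount (u \<omega>) (A i)) \<partial>M)
      = (\<Prod>i\<in>I. \<integral>\<^sup>+\<omega>. ennreal (s i ^ pcount (u \<omega>) (A i)) \<partial>M)"
    using indep_vars_nn_integral[OF assms(1) ind] assms(5) by (simp add: prod_ennreal)
  also have "\<dots> = (\<Prod>i\<in>I. ennreal (exp (measure (PD_intensity \<theta>) (A i) * (s i - 1))))"
    using assms(2,3,5) by (intro prod.cong refl nn_integral_power_pcount) auto
  finally show ?thesis
    by (simp add: prod_ennreal)
qed

text \<open>The count above \<open>2\<^sup>-\<^sup>k\<^sup>-\<^sup>1\<close> has mean \<open>2\<^sup>(\<^sup>k\<^sup>+\<^sup>1\<^sup>)\<^sup>\<theta>\<close>, so for \<open>\<theta> < 1\<close> the condensed series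
  \<open>\<Sum>\<^sub>k 2\<^sup>-\<^sup>k N\<^sub>k\<close> has finite expectation.\<close>
lemma AE_summable:
  assumes "0 < \<theta>" "\<theta> < 1"
  shows "AE \<omega> in M. summable (u \<omega>)"
proof -
  define N where "N k \<omega> = pcount (u \<omega>) {1/2^Suc k<..}" for k \<omega>
  define Z where "Z \<omega> = (\<Sum>k. ennreal ((1/2)^k * real (N k \<omega>)))" for \<omega>
  define q :: real where "q = 2 powr \<theta> / 2"
  have N_meas: "N k \<in> measurable M (count_space UNIV)" for k
    unfolding N_def by (rule measurable_pcount[of "1/2^Suc k"]) auto
  have term_meas: "(\<lambda>\<omega>. ennreal ((1/2)^k * real (N k \<omega>))) \<in> borel_measurable M" for k
    using measurable_compose[OF N_meas[of k], of "\<lambda>n. ennreal ((1/2)^k * real n)" borel] by simp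
  have Z_meas: "Z \<in> borel_measurable M"
    unfolding Z_def using term_meas by (rule borel_measurable_suminf_order)
  have "0 \<le> q" "q < 1"
    using powr_less_mono[of \<theta> 1 2] assms by (auto simp: q_def)
  have "(\<integral>\<^sup>+\<omega>. Z \<omega> \<partial>M) = (\<Sum>k. \<integral>\<^sup>+\<omega>. ennreal ((1/2)^k * real (N k \<omega>)) \<partial>M)"
    unfolding Z_def by (rule nn_integral_suminf) (rule term_meas)
  also have "\<dots> = (\<Sum>k. ennreal (2 powr \<theta> * q^k))"
  proof (rule suminf_cong)
    fix k
    have "(\<integral>\<^sup>+\<omega>. ennreal (real (N k \<omega>)) \<partial>M) = ennreal ((1 / 2 ^ Suc k) powr (-\<theta>))"
      unfolding N_def using assms
      by (subst nn_integral_pcount[of "1/2^Suc k"]) (auto simp: measure_PD_intensity_greaterThan)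
    moreover have "(\<integral>\<^sup>+\<omega>. ennreal ((1/2)^k * real (N k \<omega>)) \<partial>M)
        = ennreal ((1/2)^k) * (\<integral>\<^sup>+\<omega>. ennreal (real (N k \<omega>)) \<partial>M)"
      using measurable_compose[OF N_meas[of k], of "\<lambda>n. ennreal (real n)" borel]
      by (simp add: ennreal_mult nn_integral_cmult)
    moreover have "(1/2)^k * (1 / 2 ^ Suc k) powr (-\<theta>) = 2 powr \<theta> * q^k"
      using inverse_power_powr_neg[of 2 "Suc k" \<theta>] by (simp add: q_def power_divide field_simps)
    ultimately show "(\<integral>\<^sup>+\<omega>. ennreal ((1/2)^k * real (N k \<omega>)) \<partial>M) = ennreal (2 powr \<theta> * q^k)"
      by (simp add: ennreal_mult[symmetric])
  qed
  also have "\<dots> \<noteq> \<infinity>"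
  proof -
    have "(\<Sum>k. ennreal (2 powr \<theta> * q^k)) \<noteq> top"
      using \<open>0 \<le> q\<close> \<open>q < 1\<close> by (intro ennreal_suminf_neq_top summable_mult summable_geometric) auto
    then show ?thesis by simp
  qed
  finally have "AE \<omega> in M. Z \<omega> \<noteq> \<infinity>"
    by (intro nn_integral_PInf_AE Z_meas)
  then show ?thesis
    using AE_space
  proof eventually_elim
    case (elim \<omega>)
    have "summable (\<lambda>k. (1/2)^k * real (N k \<omega>))"
      using elim(1) unfolding Z_def by (intro summable_suminf_not_top) auto
    with point_Suc_less[OF elim(2)] point_pos[OF elim(2)] point_tendsto_zero[OF elim(2)]
    show "summable (u \<omega>)"
      unfolding N_def by (rule summable_if_dyadic_pcounts_summable)
  qed
qed

lemma nn_integral_exp_neg_total_le_laplace_step_sum: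
  assumes "0 < \<theta>" "\<theta> < 1" "0 \<le> l"
  shows "(\<integral>\<^sup>+\<omega>. ennreal (exp (-l * suminf (u \<omega>))) \<partial>M) \<le> ennreal (exp (- laplace_step_sum \<theta> l m))"
proof -
  define I where "I = {1..<m*2^m}"
  define s where "s j = exp (-l * (real j / 2^m))" for j :: nat
  have "AE \<omega> in M. ennreal (exp (-l * suminf (u \<omega>)))
      \<le> ennreal (\<Prod>j\<in>I. s j ^ pcount (u \<omega>) (dyadic_cell m j))"
    using AE_summable[OF assms(1,2)] AE_space
  proof eventually_elim
    case (elim \<omega>)
    have "exp (-l * suminf (u \<omega>)) \<le> (\<Prod>j\<in>I. s j ^ pcount (u \<omega>) (dyadic_cell m j))"
      unfolding I_def s_def using elim(1) assms(3) point_pos[OF elim(2)] point_tendsto_zero[OF elim(2)]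
      by (intro exp_neg_suminf_le_prod_power_pcount) (auto intro: less_imp_le)
    then show ?case by (rule ennreal_leI)
  qed
  then have "(\<integral>\<^sup>+\<omega>. ennreal (exp (-l * suminf (u \<omega>))) \<partial>M)
      \<le> (\<integral>\<^sup>+\<omega>. ennreal (\<Prod>j\<in>I. s j ^ pcount (u \<omega>) (dyadic_cell m j)) \<partial>M)"
    by (rule nn_integral_mono_AE)
  also have "\<dots> = ennreal (\<Prod>j\<in>I. exp (measure (PD_intensity \<theta>) (dyadic_cell m j) * (s j - 1)))"
    using dyadic_cell_subset
    by (intro nn_integral_prod_power_pcount[of I "1/2^Suc m"])
       (auto simp: I_def s_def disjoint_family_dyadic_cell)
  also have "(\<Prod>j\<in>I. exp (measure (PD_intensity \<theta>) (dyadic_cell m j) * (s j - 1)))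
      = exp (- laplace_step_sum \<theta> l m)"
    unfolding laplace_step_sum_def I_def s_def sum_negf[symmetric]
    by (subst exp_sum[symmetric]) (auto intro!: arg_cong[where f=exp] sum.cong simp: algebra_simps)
  finally show ?thesis .
qed

lemma nn_integral_exp_neg_total_le:
  assumes "0 < \<theta>" "\<theta> < 1" "0 < l"
  shows "(\<integral>\<^sup>+\<omega>. ennreal (exp (-l * suminf (u \<omega>))) \<partial>M) \<le> ennreal (exp (- (Gamma (1 - \<theta>) * l powr \<theta>)))"
proof (rule tendsto_le[OF sequentially_bot])
  show "(\<lambda>m. ennreal (exp (- laplace_step_sum \<theta> l m))) \<longlonglongrightarrow> ennreal (exp (- (Gamma (1 - \<theta>) * l powr \<theta>)))"
    by (intro tendsto_ennrealI tendsto_intros laplace_step_sum_tendsto assms)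
  show "\<forall>\<^sub>F m in sequentially.
      (\<integral>\<^sup>+\<omega>. ennreal (exp (-l * suminf (u \<omega>))) \<partial>M) \<le> ennreal (exp (- laplace_step_sum \<theta> l m))"
    using assms by (intro always_eventually allI nn_integral_exp_neg_total_le_laplace_step_sum) auto
qed simp

text \<open>Tonelli with \<open>1/S = \<integral>\<^sub>0\<^sup>\<infinity> exp (-l S) dl\<close>, then the Laplace bound.\<close>
lemma nn_integral_inverse_total_le:
  assumes "0 < \<theta>" "\<theta> < 1"
  shows "(\<integral>\<^sup>+\<omega>. ennreal (1 / suminf (u \<omega>)) \<partial>M)
    \<le> ennreal (Gamma (1 + 1/\<theta>) * Gamma (1 - \<theta>) powr (-1/\<theta>))"
proof -
  interpret P: pair_sigma_finite M lborel ..
  define H where "H \<omega> l = ennreal (exp (-l * suminf (u \<omega>))) * indicator {0..} l" for \<omega> l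
  have Hm: "case_prod H \<in> borel_measurable (M \<Otimes>\<^sub>M lborel)"
    unfolding H_def by measurable
  have inverse: "AE \<omega> in M. ennreal (1 / suminf (u \<omega>)) = (\<integral>\<^sup>+l. H \<omega> l \<partial>lborel)"
    using AE_summable[OF assms] AE_space
  proof eventually_elim
    case (elim \<omega>)
    then have "0 < suminf (u \<omega>)"
      using point_pos by (intro suminf_pos) auto
    then show ?case
      unfolding H_def by (rule nn_integral_exp_neg_mult_atLeast[symmetric])
  qed
  have laplace: "AE l in lborel.
      (\<integral>\<^sup>+\<omega>. H \<omega> l \<partial>M) \<le> ennreal (indicator {0..} l * exp (-(Gamma (1 - \<theta>) * l powr \<theta>)))"
    using AE_lborel_singleton[of 0]
  proof eventually_elim
    case (elim l)
    show ?case
    proof (cases "0 < l")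
      case True
      then have "(\<integral>\<^sup>+\<omega>. H \<omega> l \<partial>M) = (\<integral>\<^sup>+\<omega>. ennreal (exp (-l * suminf (u \<omega>))) \<partial>M)"
        by (simp add: H_def)
      also have "\<dots> \<le> ennreal (exp (- (Gamma (1 - \<theta>) * l powr \<theta>)))"
        by (rule nn_integral_exp_neg_total_le[OF assms True])
      finally show ?thesis using True by simp
    next
      case False
      with elim have "l < 0" by simp
      then show ?thesis by (simp add: H_def)
    qed
  qed
  have "(\<integral>\<^sup>+\<omega>. ennreal (1 / suminf (u \<omega>)) \<partial>M) = (\<integral>\<^sup>+\<omega>. (\<integral>\<^sup>+l. H \<omega> l \<partial>lborel) \<partial>M)"
    using inverse by (rule nn_integral_cong_AE)
  also have "\<dots> = (\<integral>\<^sup>+l. (\<integral>\<^sup>+\<omega>. H \<omega> l \<partial>M) \<partial>lborel)"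
    by (rule P.Fubini'[OF Hm, symmetric])
  also have "\<dots> \<le> (\<integral>\<^sup>+l. ennreal (indicator {0..} l * exp (-(Gamma (1 - \<theta>) * l powr \<theta>))) \<partial>lborel)"
    using laplace by (rule nn_integral_mono_AE)
  also have "\<dots> = ennreal (Gamma (1 + 1/\<theta>) * Gamma (1 - \<theta>) powr (-1/\<theta>))"
    using assms Gamma_real_pos[of "1 - \<theta>"] by (intro nn_integral_exp_neg_powr) auto
  finally show ?thesis .
qed

text \<open>Chernoff: \<open>u \<omega> (n - 1) > t\<close> means that at least \<open>n\<close> points exceed \<open>t\<close>, while their
  number is Poisson with mean \<open>t\<^sup>-\<^sup>\<theta> = n / (1 + \<delta>)\<close>; apply Markov's inequality to \<open>(1 + \<delta>)\<^sup>N\<close>.\<close>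
lemma prob_point_greater_le:
  assumes "0 < \<theta>" "0 < \<delta>" "\<delta> < 1" "1 \<le> n"
  shows "prob {\<omega>\<in>space M. ((1 + \<delta>) / real n) powr (1/\<theta>) < u \<omega> (n - 1)} \<le> exp (- real n * \<delta>\<^sup>2 / 8)"
proof -
  define t where "t = ((1 + \<delta>) / real n) powr (1/\<theta>)"
  define s where "s = 1 + \<delta>"
  define E where "E = {\<omega>\<in>space M. t < u \<omega> (n - 1)}"
  have t: "0 < t" using assms by (simp add: t_def)
  have s: "1 < s" using assms by (simp add: s_def)
  have mean: "measure (PD_intensity \<theta>) {t<..} = real n / s"
  proof -
    have "t powr (-\<theta>) = ((1 + \<delta>) / real n) powr (-1)"
      unfolding t_def using assms by (simp add: powr_powr)
    then show ?thesis
      using assms measure_PD_intensity_greaterThan[OF assms(1) t] by (simp add: powr_minus_divide s_def)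
  qed
  have "emeasure M E = (\<integral>\<^sup>+\<omega>. indicator E \<omega> \<partial>M)"
    unfolding E_def by (subst nn_integral_indicator) auto
  also have "\<dots> \<le> (\<integral>\<^sup>+\<omega>. ennreal (1 / s^n) * ennreal (s ^ pcount (u \<omega>) {t<..}) \<partial>M)"
  proof (rule nn_integral_mono)
    fix \<omega> assume \<omega>: "\<omega> \<in> space M"
    show "indicator E \<omega> \<le> ennreal (1 / s^n) * ennreal (s ^ pcount (u \<omega>) {t<..})"
    proof (cases "\<omega> \<in> E")
      case True
      then have "n - 1 < pcount (u \<omega>) {t<..}"
        using less_point_iff_less_pcount[OF \<omega> t] by (simp add: E_def)
      then have "n \<le> pcount (u \<omega>) {t<..}"
        using assms(4) by linarith
      then have "s^n \<le> s ^ pcount (u \<omega>) {t<..}" using s by (intro power_increasing) auto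
      then have "1 \<le> 1 / s^n * s ^ pcount (u \<omega>) {t<..}" using s by (simp add: field_simps)
      then show ?thesis using True s by (simp add: ennreal_mult[symmetric])
    qed simp
  qed
  also have "\<dots> = ennreal (1 / s^n) * ennreal (exp (real n / s * (s - 1)))"
    using measurable_pcount[OF t] nn_integral_power_pcount[OF t _ order_refl, of s] s mean
    by (subst nn_integral_cmult) auto
  also have "\<dots> = ennreal (exp (real n * (\<delta> / (1 + \<delta>) - ln (1 + \<delta>))))"
  proof -
    have "s ^ n = exp (real n * ln s)" using s by (simp add: exp_of_nat_mult)
    then have "1 / s^n * exp (real n / s * (s - 1)) = exp (real n * (\<delta> / (1 + \<delta>) - ln (1 + \<delta>)))"
      by (simp add: s_def exp_diff[symmetric] right_diff_distrib exp_minus field_simps)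
    then show ?thesis using s by (simp add: ennreal_mult[symmetric])
  qed
  also have "\<dots> \<le> ennreal (exp (- real n * \<delta>\<^sup>2 / 8))"
    using mult_left_mono[OF Poisson_Chernoff_exponent_le[OF assms(2,3)], of "real n"]
    by (intro ennreal_leI) simp
  finally show ?thesis
    by (simp add: E_def t_def emeasure_eq_measure)
qed

lemma integral_PD_coord_le:
  assumes "0 < \<theta>" "\<theta> < 1" "0 \<le> t"
  shows "(\<integral>\<omega>. PD_coord (u \<omega>) n \<partial>M)
    \<le> prob {\<omega>\<in>space M. t < u \<omega> (n - 1)} + t * (Gamma (1 + 1/\<theta>) * Gamma (1 - \<theta>) powr (-1/\<theta>))"
proof -
  define E where "E = {\<omega>\<in>space M. t < u \<omega> (n - 1)}"
  define C where "C = Gamma (1 + 1/\<theta>) * Gamma (1 - \<theta>) powr (-1/\<theta>)"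
  have E[measurable]: "E \<in> sets M" unfolding E_def by measurable
  have "0 \<le> C"
    using Gamma_real_pos[of "1 + 1/\<theta>"] assms by (simp add: C_def add_pos_pos)
  have bound: "AE \<omega> in M. ennreal (PD_coord (u \<omega>) n) \<le> indicator E \<omega> + ennreal t * ennreal (1 / suminf (u \<omega>))"
    using AE_summable[OF assms(1,2)] AE_space
  proof eventually_elim
    case (elim \<omega>)
    then have "0 \<le> 1 / suminf (u \<omega>)"
      using point_pos by (intro divide_nonneg_nonneg suminf_nonneg less_imp_le) auto
    then show ?case
      using PD_coord_le[where f="u \<omega>" and t=t and n=n] elim point_pos[OF elim(2)] assms(3)
      by (cases "\<omega> \<in> E") (auto simp: E_def ennreal_mult[symmetric] ennreal_le_1 intro!: add_increasing2)
  qed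
  have "(\<integral>\<^sup>+\<omega>. ennreal (PD_coord (u \<omega>) n) \<partial>M)
      \<le> (\<integral>\<^sup>+\<omega>. indicator E \<omega> + ennreal t * ennreal (1 / suminf (u \<omega>)) \<partial>M)"
    by (rule nn_integral_mono_AE[OF bound])
  also have "\<dots> = emeasure M E + ennreal t * (\<integral>\<^sup>+\<omega>. ennreal (1 / suminf (u \<omega>)) \<partial>M)"
    by (simp add: nn_integral_add nn_integral_cmult)
  also have "\<dots> \<le> ennreal (prob E) + ennreal t * ennreal C"
    unfolding C_def using nn_integral_inverse_total_le[OF assms(1,2)]
    by (intro add_mono mult_left_mono) (auto simp: emeasure_eq_measure)
  also have "\<dots> = ennreal (prob E + t * C)"
    using assms \<open>0 \<le> C\<close> by (simp add: ennreal_mult ennreal_plus)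
  finally have "(\<integral>\<^sup>+\<omega>. ennreal (PD_coord (u \<omega>) n) \<partial>M) \<le> ennreal (prob E + t * C)" .
  moreover have "AE \<omega> in M. 0 \<le> PD_coord (u \<omega>) n"
    using AE_summable[OF assms(1,2)] AE_space
    by eventually_elim (auto intro: PD_coord_nonneg less_imp_le point_pos)
  then have "(\<integral>\<omega>. PD_coord (u \<omega>) n \<partial>M) = enn2real (\<integral>\<^sup>+\<omega>. ennreal (PD_coord (u \<omega>) n) \<partial>M)"
    by (intro integral_eq_nn_integral) (simp_all add: PD_coord_def)
  ultimately show ?thesis
    using assms \<open>0 \<le> C\<close> by (auto simp: E_def C_def intro!: enn2real_leI)
qed

end

theorem mainTheorem16:
  fixes M :: "'a measure" and \<theta> \<delta> :: real and u :: "'a \<Rightarrow> nat \<Rightarrow> real" and n :: nat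
  assumes "0 < \<theta>" "\<theta> < 1"
    and "ranked_PPP M \<theta> u"
    and "0 < \<delta>" "\<delta> < 1"
    and "1 \<le> n"
  shows "(\<integral>\<omega>. PD_coord (u \<omega>) n \<partial>M)
         \<le> exp (- real n * \<delta>\<^sup>2 / 8)
           + Gamma (1 + 1 / \<theta>) / (Gamma (1 - \<theta>) powr (1 / \<theta>))
             * (1 + \<delta>) powr (1 / \<theta>) * real n powr (- 1 / \<theta>)"
proof -
  interpret ranked_Poisson_process M \<theta> u
    by (rule ranked_Poisson_process.intro) fact
  define t where "t = ((1 + \<delta>) / real n) powr (1/\<theta>)"
  have "(\<integral>\<omega>. PD_coord (u \<omega>) n \<partial>M)
      \<le> prob {\<omega>\<in>space M. t < u \<omega> (n - 1)} + t * (Gamma (1 + 1/\<theta>) * Gamma (1 - \<theta>) powr (-1/\<theta>))"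
    using assms by (intro integral_PD_coord_le) (auto simp: t_def)
  also have "prob {\<omega>\<in>space M. t < u \<omega> (n - 1)} \<le> exp (- real n * \<delta>\<^sup>2 / 8)"
    unfolding t_def using assms by (intro prob_point_greater_le)
  also have "t * (Gamma (1 + 1/\<theta>) * Gamma (1 - \<theta>) powr (-1/\<theta>))
      = Gamma (1 + 1 / \<theta>) / (Gamma (1 - \<theta>) powr (1 / \<theta>)) * (1 + \<delta>) powr (1 / \<theta>) * real n powr (- 1 / \<theta>)"
  proof -
    have "Gamma (1 - \<theta>) powr (-1/\<theta>) = 1 / Gamma (1 - \<theta>) powr (1/\<theta>)"
      and "real n powr (-1/\<theta>) = 1 / real n powr (1/\<theta>)"
      by (simp_all add: powr_minus_divide[symmetric])
    moreover have "t = (1 + \<delta>) powr (1/\<theta>) / real n powr (1/\<theta>)"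
      unfolding t_def by (rule powr_divide)
    ultimately show ?thesis by (simp add: mult_ac)
  qed
  finally show ?thesis by simp
qed

end
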